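(* Let $E$ be a finite set, $\omega:2^E\to[0,\infty)$, and suppose $Z=Z(\omega;\mathbf{y})$ is Rayleigh. Let $e,f,g\in E$ be distinct. Then for all $\mathbf{y}$ with all $y_c>0$, $$\Theta Z\{e,f|g\}\ge -2\sqrt{\Delta Z^g\{e,f\}\,\Delta Z_g\{e,f\}},$$ where $\Theta Z\{e,f|g\}=Z_e^{fg}Z_{fg}^e+Z_f^{eg}Z_{eg}^f-Z_g^{ef}Z_{ef}^g-Z_{efg}Z^{efg}$.
   Context: $Z(\omega;\mathbf{y})=\sum_{S\subseteq E}\omega(S)\prod_{e\in S}y_e$ with $\omega$ not identically zero. For a multiaffine polynomial $Z$, superscripts denote setting the indicated variables to $0$ and subscripts denote partial differentiation in the indicated variables, e.g. $Z_e^{fg}=(\partial Z/\partial y_e)|_{y_f=y_g=0}$. $\Delta Z\{e,f\}=Z_eZ_f-Z_{ef}Z$; $\Delta Z^g\{e,f\}$ and $\Delta Z_g\{e,f\}$ denote this quantity computed for the polynomials $Z^g$ and $Z_g$ respectively. $Z$ is Rayleigh if $\Delta Z\{e,f\}(\mathbf{y})\ge0$ for all distinct $e,f$ and all $\mathbf{y}>0$ coordinatewise. *)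

theory Defs
  imports "HOL-Analysis.Analysis"
begin

text \<open>A multiaffine polynomial Z(w;y) = sum over S subseteq E of w(S) * prod_{e in S} y_e,
  represented by its coefficient function w on subsets of the ground set E.\<close>

definition Zpoly :: "'a set \<Rightarrow> ('a set \<Rightarrow> real) \<Rightarrow> ('a \<Rightarrow> real) \<Rightarrow> real" where
  "Zpoly E w y = (\<Sum>S\<in>Pow E. w S * (\<Prod>e\<in>S. y e))"

text \<open>Partial derivative in y_e of a multiaffine polynomial, at the coefficient level:
  coefficient of S in Z_e is w(S + e) if e notin S, and 0 otherwise.\<close>
definition pdiff :: "'a \<Rightarrow> ('a set \<Rightarrow> real) \<Rightarrow> ('a set \<Rightarrow> real)" where
  "pdiff e w = (\<lambda>S. if e \<in> S then 0 else w (insert e S))"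

text \<open>Setting y_e := 0, at the coefficient level.\<close>
definition setzero :: "'a \<Rightarrow> ('a set \<Rightarrow> real) \<Rightarrow> ('a set \<Rightarrow> real)" where
  "setzero e w = (\<lambda>S. if e \<in> S then 0 else w S)"

definition DeltaZ :: "'a set \<Rightarrow> ('a set \<Rightarrow> real) \<Rightarrow> 'a \<Rightarrow> 'a \<Rightarrow> ('a \<Rightarrow> real) \<Rightarrow> real" where
  "DeltaZ E w e f y = Zpoly E (pdiff e w) y * Zpoly E (pdiff f w) y
                      - Zpoly E (pdiff e (pdiff f w)) y * Zpoly E w y"

definition rayleigh :: "'a set \<Rightarrow> ('a set \<Rightarrow> real) \<Rightarrow> bool" where
  "rayleigh E w \<longleftrightarrow> (\<forall>e\<in>E. \<forall>f\<in>E. e \<noteq> f \<longrightarrow>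
      (\<forall>y. (\<forall>c\<in>E. y c > 0) \<longrightarrow> DeltaZ E w e f y \<ge> 0))"

definition ThetaZ :: "'a set \<Rightarrow> ('a set \<Rightarrow> real) \<Rightarrow> 'a \<Rightarrow> 'a \<Rightarrow> 'a \<Rightarrow> ('a \<Rightarrow> real) \<Rightarrow> real" where
  "ThetaZ E w e f g y =
     Zpoly E (setzero f (setzero g (pdiff e w))) y * Zpoly E (setzero e (pdiff f (pdiff g w))) y
   + Zpoly E (setzero e (setzero g (pdiff f w))) y * Zpoly E (setzero f (pdiff e (pdiff g w))) y
   - Zpoly E (setzero e (setzero f (pdiff g w))) y * Zpoly E (setzero g (pdiff e (pdiff f w))) y
   - Zpoly E (pdiff e (pdiff f (pdiff g w))) y * Zpoly E (setzero e (setzero f (setzero g w))) y"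

end

theory Submission
  imports Defs
begin

text \<open>Freeze every variable except \<open>y\<^sub>g = t\<close>. Since \<open>Z\<close> is affine in \<open>y\<^sub>g\<close>, with
  \<open>Z = Z\<^sup>g + t Z\<^sub>g\<close>, the Rayleigh difference \<open>\<Delta>Z{e,f}\<close> becomes a quadratic in \<open>t\<close> with
  constant coefficient \<open>\<Delta>Z\<^sup>g{e,f}\<close>, leading coefficient \<open>\<Delta>Z\<^sub>g{e,f}\<close> and middle coefficient
  \<open>\<Theta>Z{e,f|g}\<close>. It is nonnegative for all \<open>t > 0\<close> by the Rayleigh property, and a real
  quadratic \<open>p + q t + r t\<^sup>2\<close> that is nonnegative on \<open>(0,\<infinity>)\<close> satisfies
  \<open>q \<ge> -2 sqrt (p r)\<close>.\<close>

lemma setzero_commute: "setzero a (setzero b w) = setzero b (setzero a w)"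
  by (auto simp: setzero_def)

lemma pdiff_commute: "pdiff a (pdiff b w) = pdiff b (pdiff a w)"
  by (auto simp: pdiff_def insert_commute)

lemma pdiff_setzero: "a \<noteq> b \<Longrightarrow> pdiff a (setzero b w) = setzero b (pdiff a w)"
  by (auto simp: pdiff_def setzero_def)

lemma Zpoly_split:
  assumes "finite E" "a \<in> E"
  shows "Zpoly E w y = Zpoly E (setzero a w) y + y a * Zpoly E (pdiff a w) y"
proof -
  obtain E' where E: "E = insert a E'" "a \<notin> E'" "finite E'"
    using assms by (metis Set.set_insert finite_insert)
  have inj: "inj_on (insert a) (Pow E')"
    using E(2) by (intro inj_onI) (metis PowD insert_ident subset_iff)
  have decomp: "Zpoly E v y = (\<Sum>S\<in>Pow E'. v S * prod y S)
      + (\<Sum>S\<in>Pow E'. v (insert a S) * (y a * prod y S))" for v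
  proof -
    have "Zpoly E v y = (\<Sum>S\<in>Pow E'. v S * prod y S) + (\<Sum>S\<in>insert a ` Pow E'. v S * prod y S)"
      unfolding Zpoly_def E(1) Pow_insert using E by (intro sum.union_disjoint) auto
    also have "(\<Sum>S\<in>insert a ` Pow E'. v S * prod y S) = (\<Sum>S\<in>Pow E'. v (insert a S) * prod y (insert a S))"
      using inj by (simp add: sum.reindex)
    also have "\<dots> = (\<Sum>S\<in>Pow E'. v (insert a S) * (y a * prod y S))"
    proof (intro sum.cong refl)
      fix S assume "S \<in> Pow E'"
      then have "finite S" "a \<notin> S" using E by (auto intro: finite_subset)
      then show "v (insert a S) * prod y (insert a S) = v (insert a S) * (y a * prod y S)"
        by simp
    qed
    finally show ?thesis .
  qed
  have "Zpoly E (setzero a w) y = (\<Sum>S\<in>Pow E'. w S * prod y S)"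
    unfolding decomp using E(2) by (auto simp: setzero_def intro!: sum.cong)
  moreover have "Zpoly E (pdiff a w) y = (\<Sum>S\<in>Pow E'. w (insert a S) * prod y S)"
    unfolding decomp using E(2) by (auto simp: pdiff_def intro!: sum.cong)
  ultimately show ?thesis
    unfolding decomp[of w] by (simp add: sum_distrib_left algebra_simps)
qed

lemma Zpoly_fun_upd_free:
  assumes "\<And>S. c \<in> S \<Longrightarrow> w S = 0"
  shows "Zpoly E w (y(c := t)) = Zpoly E w y"
  unfolding Zpoly_def
proof (intro sum.cong refl)
  fix S
  show "w S * prod (y(c := t)) S = w S * prod y S"
    using assms by (cases "c \<in> S") (auto intro!: prod.cong)
qed

lemma Zpoly_fun_upd:
  assumes "finite E" "a \<in> E"
  shows "Zpoly E w (y(a := t)) = Zpoly E (setzero a w) y + t * Zpoly E (pdiff a w) y"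
  using Zpoly_split[OF assms, of w "y(a := t)"]
  by (simp add: Zpoly_fun_upd_free setzero_def pdiff_def)

lemma Zpoly_split2:
  assumes "finite E" "a \<in> E" "b \<in> E" "a \<noteq> b"
  shows "Zpoly E w y = Zpoly E (setzero a (setzero b w)) y + y a * Zpoly E (setzero b (pdiff a w)) y
      + y b * Zpoly E (setzero a (pdiff b w)) y + y a * y b * Zpoly E (pdiff a (pdiff b w)) y"
  using Zpoly_split[OF assms(1,2), of w] Zpoly_split[OF assms(1,3), of "setzero a w"]
    Zpoly_split[OF assms(1,3), of "pdiff a w"] assms(4)
  by (simp add: pdiff_setzero setzero_commute pdiff_commute algebra_simps)

text \<open>After expanding each factor on the right in \<open>y\<^sub>e\<close> and \<open>y\<^sub>f\<close>, all terms involving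
  \<open>y\<^sub>e\<close> or \<open>y\<^sub>f\<close> cancel.\<close>
lemma ThetaZ_eq:
  assumes "finite E" "e \<in> E" "f \<in> E" "e \<noteq> f" "e \<noteq> g" "f \<noteq> g"
  shows "ThetaZ E w e f g y =
      Zpoly E (setzero g (pdiff e w)) y * Zpoly E (pdiff g (pdiff f w)) y
    + Zpoly E (pdiff g (pdiff e w)) y * Zpoly E (setzero g (pdiff f w)) y
    - Zpoly E (setzero g (pdiff e (pdiff f w))) y * Zpoly E (pdiff g w) y
    - Zpoly E (pdiff g (pdiff e (pdiff f w))) y * Zpoly E (setzero g w) y"
  using Zpoly_split[OF assms(1,3), of "setzero g (pdiff e w)"]
    Zpoly_split[OF assms(1,2), of "setzero g (pdiff f w)"]
    Zpoly_split[OF assms(1,3), of "pdiff g (pdiff e w)"]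
    Zpoly_split[OF assms(1,2), of "pdiff g (pdiff f w)"]
    Zpoly_split2[OF assms(1-4), of "pdiff g w"]
    Zpoly_split2[OF assms(1-4), of "setzero g w"] assms(4-6)
  unfolding ThetaZ_def
  by (simp add: pdiff_setzero setzero_commute pdiff_commute algebra_simps)

lemma DeltaZ_fun_upd:
  assumes "finite E" "e \<in> E" "f \<in> E" "g \<in> E" "e \<noteq> f" "e \<noteq> g" "f \<noteq> g"
  shows "DeltaZ E w e f (y(g := t)) =
      DeltaZ E (setzero g w) e f y + ThetaZ E w e f g y * t + DeltaZ E (pdiff g w) e f y * t\<^sup>2"
  unfolding DeltaZ_def ThetaZ_eq[OF assms(1-3,5-7)] Zpoly_fun_upd[OF assms(1,4)]
  using assms(5-7) by (simp add: pdiff_setzero pdiff_commute algebra_simps power2_eq_square)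

lemma const_coeff_nonneg_if_quadratic_nonneg:
  fixes p q r :: real
  assumes "\<forall>t>0. 0 \<le> p + q * t + r * t\<^sup>2"
  shows "0 \<le> p"
proof (rule tendsto_lowerbound)
  have "((\<lambda>t. p + q * t + r * t\<^sup>2) \<longlongrightarrow> p + q * 0 + r * 0\<^sup>2) (at_right 0)"
    by (intro tendsto_intros)
  then show "((\<lambda>t. p + q * t + r * t\<^sup>2) \<longlongrightarrow> p) (at_right 0)"
    by simp
  show "\<forall>\<^sub>F t in at_right 0. 0 \<le> p + q * t + r * t\<^sup>2"
    using eventually_at_right_less by (rule eventually_mono) (use assms in auto)
qed simp

lemma quadratic_nonneg_reflect:
  fixes p q r :: real
  assumes "\<forall>t>0. 0 \<le> p + q * t + r * t\<^sup>2"
  shows "\<forall>t>0. 0 \<le> r + q * t + p * t\<^sup>2"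
proof (intro allI impI)
  fix t :: real assume "t > 0"
  then have "0 \<le> p + q * (1 / t) + r * (1 / t)\<^sup>2"
    using assms by (metis divide_pos_pos zero_less_one)
  then have "0 \<le> t\<^sup>2 * (p + q * (1 / t) + r * (1 / t)\<^sup>2)"
    by simp
  also have "\<dots> = r + q * t + p * t\<^sup>2"
    using \<open>t > 0\<close> by (simp add: field_simps power2_eq_square)
  finally show "0 \<le> r + q * t + p * t\<^sup>2" .
qed

lemma linear_coeff_nonneg_if_quadratic_nonneg:
  fixes q r :: real
  assumes "\<forall>t>0. 0 \<le> q * t + r * t\<^sup>2"
  shows "0 \<le> q"
proof (rule const_coeff_nonneg_if_quadratic_nonneg)
  show "\<forall>t>0. 0 \<le> q + r * t + 0 * t\<^sup>2"
  proof (intro allI impI)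
    fix t :: real assume "t > 0"
    then have "0 \<le> q * t + r * t\<^sup>2"
      using assms by blast
    also have "\<dots> = t * (q + r * t)"
      by (simp add: algebra_simps power2_eq_square)
    finally have "0 \<le> t * (q + r * t)" .
    then show "0 \<le> q + r * t + 0 * t\<^sup>2"
      using \<open>t > 0\<close> by (simp add: zero_le_mult_iff)
  qed
qed

lemma linear_coeff_bound_if_quadratic_nonneg:
  fixes p q r :: real
  assumes nonneg: "\<forall>t>0. 0 \<le> p + q * t + r * t\<^sup>2"
  shows "- 2 * sqrt (p * r) \<le> q"
proof -
  have "0 \<le> p" using nonneg by (rule const_coeff_nonneg_if_quadratic_nonneg)
  moreover have "0 \<le> r"
    using quadratic_nonneg_reflect[OF nonneg] by (rule const_coeff_nonneg_if_quadratic_nonneg)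
  ultimately consider "p = 0" | "r = 0" | "p > 0" "r > 0" by linarith
  then show ?thesis
  proof cases
    case 1
    then show ?thesis
      using nonneg linear_coeff_nonneg_if_quadratic_nonneg[of q r] by simp
  next
    case 2
    then show ?thesis
      using quadratic_nonneg_reflect[OF nonneg] linear_coeff_nonneg_if_quadratic_nonneg[of q p]
      by simp
  next
    case 3
    define t where "t = sqrt (p / r)"
    have "t > 0" "r * t\<^sup>2 = p" "sqrt (p * r) * t = p"
      using 3 by (simp_all add: t_def real_sqrt_mult[symmetric])
    moreover have "0 \<le> p + q * t + r * t\<^sup>2"
      using nonneg \<open>t > 0\<close> by blast
    ultimately have "(- 2 * sqrt (p * r)) * t \<le> q * t" by simp
    then show ?thesis using \<open>t > 0\<close> by (rule mult_right_le_imp_le)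
  qed
qed

theorem proposition4p15:
  fixes E :: "'a set" and \<omega> :: "'a set \<Rightarrow> real" and e f g :: 'a and y :: "'a \<Rightarrow> real"
  assumes "finite E"
    and "\<forall>S\<subseteq>E. \<omega> S \<ge> 0"
    and "\<exists>S\<subseteq>E. \<omega> S \<noteq> 0"
    and "rayleigh E \<omega>"
    and "e \<in> E" "f \<in> E" "g \<in> E" "e \<noteq> f" "e \<noteq> g" "f \<noteq> g"
    and "\<forall>c\<in>E. y c > 0"
  shows "ThetaZ E \<omega> e f g y \<ge>
           - 2 * sqrt (DeltaZ E (setzero g \<omega>) e f y * DeltaZ E (pdiff g \<omega>) e f y)"
proof (rule linear_coeff_bound_if_quadratic_nonneg, intro allI impI)
  fix t :: real assume "t > 0"
  then have "\<forall>c\<in>E. (y(g := t)) c > 0" using assms(11) by simp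
  then have "0 \<le> DeltaZ E \<omega> e f (y(g := t))"
    using assms(4-6,8) unfolding rayleigh_def by blast
  then show "0 \<le> DeltaZ E (setzero g \<omega>) e f y + ThetaZ E \<omega> e f g y * t + DeltaZ E (pdiff g \<omega>) e f y * t\<^sup>2"
    by (simp only: DeltaZ_fun_upd[OF assms(1,5-10)])
qed

end
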